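(* Let $\alpha>0$ and let $w:\mathbb{R}^n\to\mathbb{R}_+$ be a $(-1/\alpha)$-concave function with $w(0)>0$. For $0<a<\alpha$ let \[ K_a(w)=\left\{x\in\mathbb{R}^n:\ a\int_0^{+\infty}t^{a-1}w(tx)\,dt\ge w(0)\right\}. \] Then for any $0<a\le b<\alpha$, \[ \left(\frac{w(0)}{\|w\|_\infty}\right)^{\frac1a-\frac1b}K_a(w)\subset K_b(w)\subset\frac{(bB(b,\alpha-b))^{1/b}}{(aB(a,\alpha-a))^{1/a}}\,K_a(w). \]
   Context: A function $w\ge0$ is $(-1/\alpha)$-concave ($\alpha>0$) if $w((1-\lambda)x+\lambda y)\ge((1-\lambda)w(x)^{-1/\alpha}+\lambda w(y)^{-1/\alpha})^{-\alpha}$ whenever $w(x)w(y)>0$, $\lambda\in[0,1]$. $B$ is the Beta function $B(x,y)=\int_0^1u^{x-1}(1-u)^{y-1}du$. *)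

theory Defs
  imports "HOL-Analysis.Analysis"
begin

definition neg_inv_concave :: "real \<Rightarrow> ('a::real_vector \<Rightarrow> real) \<Rightarrow> bool" where
  "neg_inv_concave \<alpha> w \<longleftrightarrow> (\<forall>x. 0 \<le> w x) \<and>
     (\<forall>x y l. w x * w y > 0 \<longrightarrow> 0 \<le> l \<longrightarrow> l \<le> 1 \<longrightarrow>
        w ((1 - l) *\<^sub>R x + l *\<^sub>R y) \<ge>
        ((1 - l) * w x powr (-1/\<alpha>) + l * w y powr (-1/\<alpha>)) powr (-\<alpha>))"

definition K_set :: "real \<Rightarrow> ('a::euclidean_space \<Rightarrow> real) \<Rightarrow> 'a set" where
  "K_set a w = {x. ennreal a * (\<integral>\<^sup>+ t \<in> {0<..}. ennreal (t powr (a - 1) * w (t *\<^sub>R x)) \<partial>lborel)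
                     \<ge> ennreal (w 0)}"

definition sup_norm :: "('a \<Rightarrow> real) \<Rightarrow> ereal" where
  "sup_norm w = (SUP x. ereal (w x))"

end

theory Submission
  imports Defs
begin

text \<open>Write \<open>\<phi>\<^sub>x t = w (t x)\<close> and \<open>M\<^sub>p f = \<integral>\<^sub>0\<^sup>\<infinity> t\<^sup>p\<^sup>-\<^sup>1 f t dt\<close> (the Mellin transform), so that
  \<open>x \<in> K\<^sub>p\<close> iff \<open>M\<^sub>p \<phi>\<^sub>x \<ge> w 0 / p\<close>, and \<open>M\<^sub>p \<phi>\<^bsub>\<lambda> x\<^esub> = \<lambda> powr (-p) M\<^sub>p \<phi>\<^sub>x\<close>.
  Both inclusions compare \<open>\<phi>\<^sub>x\<close> with an extremal function \<open>g\<close> that crosses it only once: if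
  \<open>f - g\<close> changes sign only at \<open>t\<^sub>0\<close>, the ratio \<open>t powr (q - p)\<close> of the Mellin weights is on either
  side of \<open>t\<^sub>0 powr (q - p)\<close> on \<open>{f > g}\<close> and \<open>{f < g}\<close>, which transfers \<open>M\<^sub>p g \<le> M\<^sub>p f\<close> to
  \<open>M\<^sub>q g \<le> M\<^sub>q f\<close>. For the first inclusion \<open>g\<close> is a box of height \<open>\<parallel>w\<parallel>\<^sub>\<infinity>\<close>, which \<open>\<phi>\<^sub>x\<close> can
  only cross from below. For the second it is \<open>w 0 (1 + s t) powr (-\<alpha>)\<close>, whose Mellin transforms
  are Beta integrals and which \<open>\<phi>\<^sub>x\<close> can only cross from above, by \<open>(-1/\<alpha>)\<close>-concavity of \<open>w\<close>
  on the segment from \<open>0\<close> to \<open>t x\<close>.\<close>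

lemma Beta_real_pos: "0 < p \<Longrightarrow> 0 < q \<Longrightarrow> 0 < Beta p (q::real)"
  unfolding Beta_def by simp

lemma Beta_substitution_integrand:
  fixes p \<alpha> s u :: real
  assumes s: "0 < s" and u: "0 < u" "u < 1"
  shows "1 / (s * (1-u)^2) * ((u / (s*(1-u))) powr (p-1) * (1 + s * (u / (s*(1-u)))) powr (-\<alpha>))
           = s powr (-p) * (u powr (p-1) * (1-u) powr (\<alpha>-p-1))"
proof -
  have "1 + s * (u / (s*(1-u))) = 1/(1-u)" using u s by (simp add: field_simps)
  then have 1: "(1 + s * (u / (s*(1-u)))) powr (-\<alpha>) = (1-u) powr \<alpha>"
    using u by (simp add: powr_divide powr_minus_divide)
  have inv: "y powr (1-p) = 1 / y powr (p-1)" for y :: real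
    by (metis minus_diff_eq powr_minus_divide)
  have 2: "(u / (s*(1-u))) powr (p-1) = u powr (p-1) * s powr (1-p) * (1-u) powr (1-p)"
    using u s unfolding inv by (simp add: powr_divide powr_mult)
  have 3: "1 / (s * (1-u)^2) = s powr (-1) * (1-u) powr (-2)"
    using u s by (simp add: powr_minus_divide powr_realpow power2_eq_square)
  have "s powr (-1) * s powr (1-p) = s powr (-p)"
    by (simp only: powr_add[symmetric]) simp
  moreover have "(1-u) powr (-2) * (1-u) powr (1-p) * (1-u) powr \<alpha> = (1-u) powr (\<alpha>-p-1)"
    by (simp only: powr_add[symmetric]) (simp add: algebra_simps)
  ultimately show ?thesis
    unfolding 1 2 3 by (metis (no_types, lifting) mult.assoc mult.left_commute)
qed

text \<open>Substituting \<open>t = u / (s (1 - u))\<close> turns the integral into the Beta integral.\<close>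
lemma has_integral_Beta_half_line:
  fixes p \<alpha> s :: real
  assumes p: "0 < p" "p < \<alpha>" and s: "0 < s"
  shows "((\<lambda>t. t powr (p-1) * (1 + s*t) powr (-\<alpha>)) has_integral (s powr (-p) * Beta p (\<alpha>-p))) {0<..}"
proof -
  define S where "S = {0<..<(1::real)}"
  define g where "g = (\<lambda>u::real. u / (s*(1-u)))"
  define f where "f = (\<lambda>t::real. t powr (p-1) * (1+s*t) powr (-\<alpha>))"
  have g_deriv: "(g has_field_derivative 1 / (s*(1-u)^2)) (at u within S)" if "u \<in> S" for u
  proof -
    have "s * (1-u) \<noteq> 0" using that s by (simp add: S_def)
    then have "(g has_field_derivative 1 / (s*(1-u)^2)) (at u)"
      unfolding g_def
      by (auto intro!: derivative_eq_intros) (simp add: divide_simps power2_eq_square, simp add: algebra_simps)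
    then show ?thesis by (rule has_field_derivative_at_within)
  qed
  have "inj_on g S"
    by (rule inj_onI) (use s in \<open>auto simp: g_def S_def field_simps\<close>)
  have g_image: "g ` S = {0<..}"
  proof
    show "g ` S \<subseteq> {0<..}" using s by (auto simp: g_def S_def)
    show "{0<..} \<subseteq> g ` S"
    proof
      fix t :: real assume t: "t \<in> {0<..}"
      have pos: "0 < 1+s*t" using s t by (simp add: add_pos_pos)
      have "s*(1 - s*t/(1+s*t)) = s/(1+s*t)" using pos by (simp add: field_simps)
      then have "g (s*t/(1+s*t)) = t" using s pos by (simp add: g_def)
      moreover have "s*t/(1+s*t) \<in> S" using s t pos by (auto simp: S_def field_simps)
      ultimately show "t \<in> g ` S" by (metis image_eqI)
    qed
  qed
  have "((\<lambda>u. u powr (p-1) * (1-u) powr (\<alpha>-p-1)) has_integral Beta p (\<alpha>-p)) S"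
    using has_integral_Beta_real[of p "\<alpha>-p"] p by (simp add: has_integral_Icc_iff_Ioo S_def)
  then have "((\<lambda>u. s powr (-p) * (u powr (p-1) * (1-u) powr (\<alpha>-p-1))) has_integral (s powr (-p) * Beta p (\<alpha>-p))) S"
    by (rule has_integral_mult_right)
  moreover have "\<bar>1 / (s*(1-u)^2)\<bar> * f (g u) = s powr (-p) * (u powr (p-1) * (1-u) powr (\<alpha>-p-1))"
    if "u \<in> S" for u
  proof -
    have u: "0 < u" "u < 1" using that by (auto simp: S_def)
    then have pos: "0 < 1 / (s*(1-u)^2)" using s by simp
    show ?thesis
      unfolding f_def g_def abs_of_pos[OF pos] using Beta_substitution_integrand[OF s u] .
  qed
  ultimately have subst: "((\<lambda>u. \<bar>1 / (s*(1-u)^2)\<bar> * f (g u)) has_integral (s powr (-p) * Beta p (\<alpha>-p))) S"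
    using has_integral_cong by (metis (no_types, lifting))
  then have "(\<lambda>u. \<bar>1 / (s*(1-u)^2)\<bar> * f (g u)) absolutely_integrable_on S"
    by (intro nonnegative_absolutely_integrable_1) (auto simp: f_def has_integral_integrable)
  then have "f absolutely_integrable_on (g ` S) \<and> integral (g ` S) f = s powr (-p) * Beta p (\<alpha>-p)"
    using has_absolute_integral_change_of_variables_1'[OF _ g_deriv \<open>inj_on g S\<close>] subst
    by (auto simp: S_def integral_unique)
  then show ?thesis
    using g_image by (auto simp: f_def absolutely_integrable_on_def has_integral_iff)
qed

definition mellin :: "real \<Rightarrow> (real \<Rightarrow> real) \<Rightarrow> ennreal" where
  "mellin p f = (\<integral>\<^sup>+ t \<in> {0<..}. ennreal (t powr (p - 1) * f t) \<partial>lborel)"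

definition mellin_weight :: "real \<Rightarrow> real \<Rightarrow> real" where
  "mellin_weight p t = indicator {0<..} t * t powr (p - 1)"

lemma mellin_weight_nonneg: "0 \<le> mellin_weight p t"
  by (simp add: mellin_weight_def)

lemma mellin_weight_measurable [measurable]: "mellin_weight p \<in> borel_measurable borel"
  unfolding mellin_weight_def by measurable

lemma mellin_eq_nn_integral_weight: "mellin p f = (\<integral>\<^sup>+ t. ennreal (mellin_weight p t * f t) \<partial>lborel)"
  unfolding mellin_def mellin_weight_def by (intro nn_integral_cong) (auto split: split_indicator)

lemma mellin_mono:
  assumes "\<And>t. 0 < t \<Longrightarrow> f t \<le> g t"
  shows "mellin p f \<le> mellin p g"
  unfolding mellin_def using assms
  by (intro nn_integral_mono) (auto split: split_indicator intro!: ennreal_leI mult_left_mono)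

lemma mellin_compose_scale:
  assumes [measurable]: "f \<in> borel_measurable borel" and c: "0 < c"
  shows "mellin p (\<lambda>t. f (c * t)) = ennreal (c powr (-p)) * mellin p f"
proof -
  have "mellin p f = ennreal \<bar>c\<bar> * (\<integral>\<^sup>+ x. ennreal (mellin_weight p (0 + c*x) * f (0 + c*x)) \<partial>lborel)"
    unfolding mellin_eq_nn_integral_weight by (rule nn_integral_real_affine) (use c in auto)
  also have "(\<lambda>x. ennreal (mellin_weight p (0 + c*x) * f (0 + c*x)))
      = (\<lambda>x. ennreal (c powr (p-1)) * ennreal (mellin_weight p x * f (c*x)))"
  proof
    fix x
    have "mellin_weight p (0 + c*x) * f (0 + c*x) = c powr (p-1) * (mellin_weight p x * f (c*x))"
      using c by (auto simp: mellin_weight_def powr_mult zero_less_mult_iff split: split_indicator)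
    then show "ennreal (mellin_weight p (0 + c*x) * f (0 + c*x))
        = ennreal (c powr (p-1)) * ennreal (mellin_weight p x * f (c*x))"
      by (simp only: ennreal_mult' powr_ge_zero)
  qed
  also have "ennreal \<bar>c\<bar> * (\<integral>\<^sup>+ x. ennreal (c powr (p-1)) * ennreal (mellin_weight p x * f (c*x)) \<partial>lborel)
      = ennreal (c powr p) * mellin p (\<lambda>t. f (c*t))"
  proof -
    have "ennreal \<bar>c\<bar> * ennreal (c powr (p-1)) = ennreal (c powr p)"
      using c by (simp add: ennreal_mult'[symmetric] powr_mult_base)
    then show ?thesis
      unfolding mellin_eq_nn_integral_weight
      by (subst nn_integral_cmult) (auto simp: mult.assoc[symmetric])
  qed
  finally have "ennreal (c powr (-p)) * mellin p f
      = ennreal (c powr (-p)) * ennreal (c powr p) * mellin p (\<lambda>t. f (c*t))"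
    by (simp add: mult.assoc)
  also have "ennreal (c powr (-p)) * ennreal (c powr p) = 1"
    using c by (simp add: ennreal_mult'[symmetric] powr_add[symmetric])
  finally show ?thesis by simp
qed

lemma mellin_eq_of_has_integral:
  assumes "\<And>t. 0 < t \<Longrightarrow> 0 \<le> f t" and "((\<lambda>t. t powr (p-1) * f t) has_integral I) {0<..}"
  shows "mellin p f = ennreal I"
proof -
  have "mellin p f = integral\<^sup>N lborel (\<lambda>x. indicator {0<..} x * (x powr (p-1) * f x))"
    unfolding mellin_def by (intro nn_integral_cong) (auto split: split_indicator)
  also have "\<dots> = I"
    by (rule nn_integral_has_integral_lebesgue) (use assms in auto)
  finally show ?thesis .
qed

lemma mellin_box:
  assumes "0 \<le> M" "0 \<le> s" "0 < p"
  shows "mellin p (\<lambda>t. M * indicator {0..s} t) = ennreal (M * s powr p / p)"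
proof -
  have "mellin p (\<lambda>t. M * indicator {0..s} t)
      = integral\<^sup>N lborel (\<lambda>x. indicator {0..s} x * (M * x powr (p-1)))"
    unfolding mellin_def by (intro nn_integral_cong) (auto split: split_indicator simp: mult.commute)
  also have "\<dots> = M * (s powr p / p)"
  proof (rule nn_integral_has_integral_lebesgue)
    show "((\<lambda>x. M * x powr (p-1)) has_integral (M * (s powr p / p))) {0..s}"
      using has_integral_mult_right[OF has_integral_powr_from_0[of "p-1" s], of M] assms by simp
  qed (use assms in auto)
  finally show ?thesis by simp
qed

text \<open>A finite Mellin transform of a constant would be invariant under rescaling by \<open>2\<close>,
  hence zero.\<close>
lemma mellin_const_infinite:
  assumes c: "0 < c" and p: "0 < p"
  shows "mellin p (\<lambda>t. c) = \<infinity>"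
proof (rule ccontr)
  assume "mellin p (\<lambda>t. c) \<noteq> \<infinity>"
  then obtain r where r: "mellin p (\<lambda>t. c) = ennreal r" "0 \<le> r"
    by (cases "mellin p (\<lambda>t. c)") auto
  have "ennreal (c / p) = mellin p (\<lambda>t. c * indicator {0..1} t)"
    using mellin_box[of c 1 p] c p by simp
  also have "\<dots> \<le> mellin p (\<lambda>t. c)"
    using c by (intro mellin_mono) (simp add: indicator_def)
  finally have lower: "c / p \<le> r" using r by simp
  have "ennreal r = ennreal (2 powr (-p) * r)"
    using mellin_compose_scale[of "\<lambda>t. c" 2 p] r by (simp add: ennreal_mult')
  then have "r = 2 powr (-p) * r" using r by (simp add: ennreal_inj)
  moreover have "(2::real) powr (-p) < 2 powr 0" by (rule powr_less_mono) (use p in auto)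
  ultimately have "r = 0" using r(2) by auto
  then show False using lower c p by (simp add: divide_le_0_iff)
qed

lemma mellin_profile:
  assumes "0 < p" "p < \<alpha>" "0 < s" "0 \<le> W"
  shows "mellin p (\<lambda>t. W * (1 + s*t) powr (-\<alpha>)) = ennreal (W * s powr (-p) * Beta p (\<alpha>-p))"
proof (rule mellin_eq_of_has_integral)
  show "((\<lambda>t. t powr (p-1) * (W * (1 + s*t) powr (-\<alpha>))) has_integral (W * s powr (-p) * Beta p (\<alpha>-p))) {0<..}"
    using has_integral_mult_right[OF has_integral_Beta_half_line[OF assms(1-3)], of W]
    by (simp add: ac_simps)
qed (use assms in auto)

lemma nn_integral_add_pos_part_diff:
  fixes f g r :: "real \<Rightarrow> real"
  assumes [measurable]: "f \<in> borel_measurable borel" "g \<in> borel_measurable borel" "r \<in> borel_measurable borel"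
    and nonneg: "\<And>t. 0 \<le> f t" "\<And>t. 0 \<le> g t" "\<And>t. 0 \<le> r t"
  shows "(\<integral>\<^sup>+t. ennreal (r t * f t) \<partial>lborel) + (\<integral>\<^sup>+t. ennreal (r t * max 0 (g t - f t)) \<partial>lborel)
       = (\<integral>\<^sup>+t. ennreal (r t * g t) \<partial>lborel) + (\<integral>\<^sup>+t. ennreal (r t * max 0 (f t - g t)) \<partial>lborel)"
proof -
  have "ennreal (r t * f t) + ennreal (r t * max 0 (g t - f t))
      = ennreal (r t * g t) + ennreal (r t * max 0 (f t - g t))" for t
  proof -
    have "r t * f t + r t * max 0 (g t - f t) = r t * g t + r t * max 0 (f t - g t)"
      by (auto simp: max_def algebra_simps)
    then show ?thesis
      using nonneg[of t] by (subst (1 2) ennreal_plus[symmetric]) simp_all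
  qed
  then show ?thesis
    by (simp add: nn_integral_add[symmetric])
qed

lemma nn_integral_le_iff_pos_part_diff_le:
  fixes f g r :: "real \<Rightarrow> real"
  assumes [measurable]: "f \<in> borel_measurable borel" "g \<in> borel_measurable borel" "r \<in> borel_measurable borel"
    and nonneg: "\<And>t. 0 \<le> f t" "\<And>t. 0 \<le> g t" "\<And>t. 0 \<le> r t"
    and finite: "(\<integral>\<^sup>+t. ennreal (r t * g t) \<partial>lborel) < \<infinity>"
  shows "(\<integral>\<^sup>+t. ennreal (r t * g t) \<partial>lborel) \<le> (\<integral>\<^sup>+t. ennreal (r t * f t) \<partial>lborel) \<longleftrightarrow>
         (\<integral>\<^sup>+t. ennreal (r t * max 0 (g t - f t)) \<partial>lborel) \<le> (\<integral>\<^sup>+t. ennreal (r t * max 0 (f t - g t)) \<partial>lborel)"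
    (is "?G \<le> ?F \<longleftrightarrow> ?N \<le> ?P")
proof -
  have split: "?F + ?N = ?G + ?P"
    by (rule nn_integral_add_pos_part_diff) (use nonneg in auto)
  have "?N \<le> ?G"
    using nonneg by (intro nn_integral_mono ennreal_leI mult_left_mono) auto
  then have "?N < \<infinity>" using finite by (rule le_less_trans)
  then have "?G \<le> ?F \<longleftrightarrow> ?N + ?G \<le> ?N + ?F"
    using ennreal_add_left_cancel_le[of ?N ?G ?F] by auto
  also have "\<dots> \<longleftrightarrow> ?G + ?N \<le> ?F + ?N" by (simp only: add.commute)
  also have "\<dots> \<longleftrightarrow> ?G + ?N \<le> ?G + ?P" unfolding split ..
  also have "\<dots> \<longleftrightarrow> ?N \<le> ?P"
    using ennreal_add_left_cancel_le[of ?G ?N ?P] finite by auto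
  finally show ?thesis .
qed

text \<open>Passing from the weight \<open>u\<close> to \<open>v\<close> multiplies the negative part of \<open>f - g\<close> by at most \<open>c\<close>
  and its positive part by at least \<open>c\<close>.\<close>
lemma nn_integral_weighted_le_transfer:
  fixes f g u v :: "real \<Rightarrow> real" and c :: real
  assumes [measurable]: "f \<in> borel_measurable borel" "g \<in> borel_measurable borel"
     "u \<in> borel_measurable borel" "v \<in> borel_measurable borel"
  and nonneg: "\<And>t. 0 \<le> f t" "\<And>t. 0 \<le> g t" "\<And>t. 0 \<le> u t" "\<And>t. 0 \<le> v t" and "0 \<le> c"
  and above: "\<And>t. g t < f t \<Longrightarrow> c * u t \<le> v t"
  and below: "\<And>t. f t < g t \<Longrightarrow> v t \<le> c * u t"
  and le: "(\<integral>\<^sup>+t. ennreal (u t * g t) \<partial>lborel) \<le> (\<integral>\<^sup>+t. ennreal (u t * f t) \<partial>lborel)"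
  and finite: "(\<integral>\<^sup>+t. ennreal (u t * g t) \<partial>lborel) < \<infinity>" "(\<integral>\<^sup>+t. ennreal (v t * g t) \<partial>lborel) < \<infinity>"
  shows "(\<integral>\<^sup>+t. ennreal (v t * g t) \<partial>lborel) \<le> (\<integral>\<^sup>+t. ennreal (v t * f t) \<partial>lborel)"
proof -
  define P where "P = (\<lambda>t. max 0 (f t - g t))"
  define N where "N = (\<lambda>t. max 0 (g t - f t))"
  let ?I = "\<lambda>r h. (\<integral>\<^sup>+t. ennreal (r t * h t) \<partial>lborel)"
  have "?I v N \<le> (\<integral>\<^sup>+t. ennreal c * ennreal (u t * N t) \<partial>lborel)"
  proof (intro nn_integral_mono)
    fix t
    have "v t * N t \<le> c * (u t * N t)"
      using mult_right_mono[OF below, of t "N t"] by (cases "f t < g t") (auto simp: N_def mult.assoc)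
    then show "ennreal (v t * N t) \<le> ennreal c * ennreal (u t * N t)"
      using \<open>0 \<le> c\<close> by (simp add: ennreal_mult'[symmetric] ennreal_leI)
  qed
  also have "\<dots> = ennreal c * ?I u N"
    by (rule nn_integral_cmult) (auto simp: N_def)
  also have "\<dots> \<le> ennreal c * ?I u P"
    using le nn_integral_le_iff_pos_part_diff_le[of f g u] nonneg finite(1)
    by (intro mult_left_mono) (auto simp: N_def P_def)
  also have "\<dots> = (\<integral>\<^sup>+t. ennreal c * ennreal (u t * P t) \<partial>lborel)"
    by (rule nn_integral_cmult[symmetric]) (auto simp: P_def)
  also have "\<dots> \<le> ?I v P"
  proof (intro nn_integral_mono)
    fix t
    have "c * (u t * P t) \<le> v t * P t"
      using mult_right_mono[OF above, of t "P t"] by (cases "g t < f t") (auto simp: P_def mult.assoc)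
    then show "ennreal c * ennreal (u t * P t) \<le> ennreal (v t * P t)"
      using \<open>0 \<le> c\<close> by (simp add: ennreal_mult'[symmetric] ennreal_leI)
  qed
  finally show ?thesis
    using nn_integral_le_iff_pos_part_diff_le[of f g v] nonneg finite(2) by (simp add: N_def P_def)
qed

lemma mellin_le_transfer:
  fixes f g :: "real \<Rightarrow> real"
  assumes [measurable]: "f \<in> borel_measurable borel" "g \<in> borel_measurable borel"
    and nonneg: "\<And>t. 0 \<le> f t" "\<And>t. 0 \<le> g t" and "0 \<le> c"
    and above: "\<And>t. 0 < t \<Longrightarrow> g t < f t \<Longrightarrow> c \<le> t powr (q - p)"
    and below: "\<And>t. 0 < t \<Longrightarrow> f t < g t \<Longrightarrow> t powr (q - p) \<le> c"
    and "mellin p g \<le> mellin p f" "mellin p g < \<infinity>" "mellin q g < \<infinity>"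
  shows "mellin q g \<le> mellin q f"
proof -
  have weight_ratio: "mellin_weight q t = t powr (q - p) * mellin_weight p t" for t
    by (simp add: mellin_weight_def powr_add[symmetric])
  have "(\<integral>\<^sup>+t. ennreal (mellin_weight q t * g t) \<partial>lborel) \<le> (\<integral>\<^sup>+t. ennreal (mellin_weight q t * f t) \<partial>lborel)"
  proof (rule nn_integral_weighted_le_transfer[where u = "mellin_weight p" and c = c])
    show "c * mellin_weight p t \<le> mellin_weight q t" if "g t < f t" for t
      using above[OF _ that] mellin_weight_nonneg[of p t] unfolding weight_ratio
      by (cases "0 < t") (auto intro: mult_right_mono simp: mellin_weight_def)
    show "mellin_weight q t \<le> c * mellin_weight p t" if "f t < g t" for t
      using below[OF _ that] mellin_weight_nonneg[of p t] unfolding weight_ratio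
      by (cases "0 < t") (auto intro: mult_right_mono simp: mellin_weight_def)
  qed (use assms mellin_weight_nonneg in \<open>simp_all add: mellin_eq_nn_integral_weight\<close>)
  then show ?thesis unfolding mellin_eq_nn_integral_weight .
qed

lemma mellin_eq_of_le_of_mellin_le:
  fixes f g :: "real \<Rightarrow> real"
  assumes [measurable]: "f \<in> borel_measurable borel" "g \<in> borel_measurable borel"
    and nonneg: "\<And>t. 0 \<le> f t" "\<And>t. 0 \<le> g t"
    and le: "\<And>t. 0 < t \<Longrightarrow> f t \<le> g t"
    and "mellin q g \<le> mellin q f" "mellin q g < \<infinity>"
  shows "mellin p g = mellin p f"
proof -
  let ?N = "\<integral>\<^sup>+t. ennreal (mellin_weight q t * max 0 (g t - f t)) \<partial>lborel"
  have "(\<integral>\<^sup>+t. ennreal (mellin_weight q t * max 0 (f t - g t)) \<partial>lborel) = 0"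
    using le by (intro nn_integral_0_iff_AE[THEN iffD2] AE_I2)
      (auto simp: mellin_weight_def split: split_indicator)
  then have "?N = 0"
    using nn_integral_le_iff_pos_part_diff_le[of f g "mellin_weight q"] assms mellin_weight_nonneg
    by (simp add: mellin_eq_nn_integral_weight)
  then have "AE t in lborel. ennreal (mellin_weight q t * max 0 (g t - f t)) = 0"
    by (subst (asm) nn_integral_0_iff_AE) auto
  then have "AE t in lborel. ennreal (mellin_weight p t * g t) = ennreal (mellin_weight p t * f t)"
  proof (rule AE_mp, intro AE_I2 impI)
    fix t assume "ennreal (mellin_weight q t * max 0 (g t - f t)) = 0"
    then show "ennreal (mellin_weight p t * g t) = ennreal (mellin_weight p t * f t)"
      using le[of t] by (cases "0 < t") (auto simp: mellin_weight_def mult_le_0_iff)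
  qed
  then show ?thesis unfolding mellin_eq_nn_integral_weight by (rule nn_integral_cong_AE)
qed

text \<open>Once \<open>f\<close> has dropped to \<open>g\<close> it stays below it, so the set \<open>{g < f}\<close> is an initial
  segment of the half line. Its supremum \<open>t\<^sub>0\<close> separates the weight ratio \<open>t powr (p - q)\<close>,
  unless the segment is empty or everything.\<close>
lemma mellin_le_of_single_crossing:
  fixes f g :: "real \<Rightarrow> real"
  assumes [measurable]: "f \<in> borel_measurable borel" "g \<in> borel_measurable borel"
    and nonneg: "\<And>t. 0 \<le> f t" "\<And>t. 0 \<le> g t" and "p \<le> q"
    and crossing: "\<And>t t'. 0 < t \<Longrightarrow> t < t' \<Longrightarrow> g t' < f t' \<Longrightarrow> g t \<le> f t"
    and le: "mellin q g \<le> mellin q f" and finite: "mellin q g < \<infinity>" "mellin p g < \<infinity>"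
  shows "mellin p g \<le> mellin p f"
proof -
  define D where "D = {t. 0 < t \<and> g t < f t}"
  consider "D = {}" | "\<not> bdd_above D" | "D \<noteq> {}" "bdd_above D" by blast
  then show ?thesis
  proof cases
    case 1
    have below: "f t \<le> g t" if "0 < t" for t
    proof -
      have "t \<notin> D" using 1 by simp
      then show ?thesis using that by (simp add: D_def not_less)
    qed
    have "mellin p g = mellin p f"
      using nonneg below le finite(1) by (rule mellin_eq_of_le_of_mellin_le[OF assms(1,2)])
    then show ?thesis by simp
  next
    case 2
    have "g t \<le> f t" if "0 < t" for t
    proof -
      obtain t' where "t' \<in> D" "t < t'" using 2 unfolding bdd_above_def by (meson not_le)
      then show ?thesis using crossing that by (auto simp: D_def)
    qed
    then show ?thesis by (rule mellin_mono)
  next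
    case 3
    define t0 where "t0 = Sup D"
    have upper: "t \<le> t0" if "t \<in> D" for t using cSup_upper[OF that 3(2)] by (simp add: t0_def)
    have "0 < t0" using 3(1) upper by (force simp: D_def)
    show ?thesis
    proof (rule mellin_le_transfer[where p = q and q = p and c = "t0 powr (p - q)"])
      show "t0 powr (p - q) \<le> t powr (p - q)" if "0 < t" "g t < f t" for t
        using upper[of t] that \<open>p \<le> q\<close> by (intro powr_mono2') (auto simp: D_def)
      show "t powr (p - q) \<le> t0 powr (p - q)" if "0 < t" "f t < g t" for t
      proof -
        have "\<not> t < t0"
        proof
          assume "t < t0"
          then obtain t' where "t' \<in> D" "t < t'" using less_cSup_iff[OF 3] by (auto simp: t0_def)
          then show False using crossing[of t t'] that by (auto simp: D_def)
        qed
        then show ?thesis using \<open>0 < t0\<close> \<open>p \<le> q\<close> by (intro powr_mono2') auto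
      qed
    qed (use assms in simp_all)
  qed
qed

lemma neg_inv_concave_nonneg: "neg_inv_concave \<alpha> w \<Longrightarrow> 0 \<le> w x"
  unfolding neg_inv_concave_def by blast

lemma neg_inv_concave_min_le:
  assumes nic: "neg_inv_concave \<alpha> w" and "0 < \<alpha>" and pos: "0 < w x * w y"
    and l: "0 \<le> l" "l \<le> 1"
  shows "min (w x) (w y) \<le> w ((1-l) *\<^sub>R x + l *\<^sub>R y)"
proof -
  define e where "e = -1/\<alpha>"
  have e: "e < 0" "e * (-\<alpha>) = 1" using \<open>0 < \<alpha>\<close> by (auto simp: e_def)
  have "0 < w x" "0 < w y"
    using pos neg_inv_concave_nonneg[OF nic, of x] neg_inv_concave_nonneg[OF nic, of y]
    by (auto simp: zero_less_mult_iff)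
  define m where "m = min (w x) (w y)"
  have m: "0 < m" "m \<le> w x" "m \<le> w y" using \<open>0 < w x\<close> \<open>0 < w y\<close> by (auto simp: m_def)
  define Q where "Q = (1 - l) * w x powr e + l * w y powr e"
  have "w x powr e \<le> m powr e" "w y powr e \<le> m powr e"
    using e m by (auto intro: powr_mono2')
  then have "Q \<le> (1-l) * m powr e + l * m powr e"
    unfolding Q_def using l by (intro add_mono mult_left_mono) auto
  then have "Q \<le> m powr e" by (simp add: algebra_simps)
  moreover have "0 < Q"
    using l \<open>0 < w x\<close> \<open>0 < w y\<close> unfolding Q_def
    by (cases "l = 0") (auto intro: add_nonneg_pos)
  ultimately have "m \<le> Q powr (-\<alpha>)"
    using m e \<open>0 < \<alpha>\<close> powr_mono2'[of "-\<alpha>" Q "m powr e"] by (simp add: powr_powr)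
  also have "\<dots> \<le> w ((1-l) *\<^sub>R x + l *\<^sub>R y)"
    using nic pos l unfolding neg_inv_concave_def Q_def e_def by blast
  finally show ?thesis by (simp add: m_def)
qed

text \<open>The superlevel sets of \<open>t \<mapsto> w (t x)\<close> are intervals.\<close>
lemma neg_inv_concave_ray_measurable:
  assumes nic: "neg_inv_concave \<alpha> w" and "0 < \<alpha>"
  shows "(\<lambda>t. w (t *\<^sub>R x)) \<in> borel_measurable borel"
  unfolding borel_measurable_iff_greater
proof
  fix c :: real
  have "is_interval {t. c < w (t *\<^sub>R x)}"
    unfolding is_interval_convex_1 convex_alt
  proof (intro ballI allI impI)
    fix t1 t2 u :: real
    assume t: "t1 \<in> {t. c < w (t *\<^sub>R x)}" "t2 \<in> {t. c < w (t *\<^sub>R x)}" and u: "0 \<le> u \<and> u \<le> 1"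
    show "(1 - u) *\<^sub>R t1 + u *\<^sub>R t2 \<in> {t. c < w (t *\<^sub>R x)}"
    proof (cases "c < 0")
      case True then show ?thesis using neg_inv_concave_nonneg[OF nic] by (auto intro: less_le_trans)
    next
      case False
      then have "0 < w (t1 *\<^sub>R x) * w (t2 *\<^sub>R x)" using t by simp
      moreover have "(1 - u) *\<^sub>R (t1 *\<^sub>R x) + u *\<^sub>R (t2 *\<^sub>R x) = ((1 - u) *\<^sub>R t1 + u *\<^sub>R t2) *\<^sub>R x"
        by (simp add: scaleR_add_left)
      ultimately have "min (w (t1 *\<^sub>R x)) (w (t2 *\<^sub>R x)) \<le> w (((1 - u) *\<^sub>R t1 + u *\<^sub>R t2) *\<^sub>R x)"
        using neg_inv_concave_min_le[OF nic \<open>0 < \<alpha>\<close>, of "t1 *\<^sub>R x" "t2 *\<^sub>R x" u] u by simp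
      then show ?thesis using t by auto
    qed
  qed
  then show "{t \<in> space borel. c < w (t *\<^sub>R x)} \<in> sets borel"
    by (simp add: real_interval_borel_measurable)
qed

text \<open>The profiles \<open>w 0 (1 + s t) powr (-\<alpha>)\<close> are exactly the \<open>(-1/\<alpha>)\<close>-affine functions of \<open>t\<close>
  with value \<open>w 0\<close> at the origin; concavity of \<open>w powr (-1/\<alpha>)\<close> on the segment from \<open>0\<close> to \<open>t\<^sub>2 x\<close>
  shows that a ray exceeding such a profile at \<open>t\<^sub>2\<close> dominates it on \<open>(0, t\<^sub>2)\<close>.\<close>
lemma neg_inv_concave_ray_above_profile:
  assumes nic: "neg_inv_concave \<alpha> w" and "0 < \<alpha>" and w0: "0 < w 0" and "0 \<le> s"
    and t: "0 < t1" "t1 < t2"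
    and above: "w 0 * (1 + s*t2) powr (-\<alpha>) < w (t2 *\<^sub>R x)"
  shows "w 0 * (1 + s*t1) powr (-\<alpha>) \<le> w (t1 *\<^sub>R x)"
proof -
  define e where "e = -1/\<alpha>"
  have e: "e < 0" "e * (-\<alpha>) = 1" "(-\<alpha>) * e = 1" using \<open>0 < \<alpha>\<close> by (auto simp: e_def)
  define p where "p = w (t2 *\<^sub>R x)"
  define l where "l = t1 / t2"
  have l: "0 < l" "l < 1" "l * t2 = t1" using t by (auto simp: l_def)
  have s1: "0 < 1 + s*t1" "0 < 1 + s*t2" using \<open>0 \<le> s\<close> t by (auto intro: add_pos_nonneg)
  have "0 < p" using above w0 s1 unfolding p_def by (smt (verit) mult_pos_pos powr_gt_zero)
  define Q where "Q = (1 - l) * w 0 powr e + l * p powr e"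
  have "(1 - l) *\<^sub>R 0 + l *\<^sub>R (t2 *\<^sub>R x) = t1 *\<^sub>R x" using l by simp
  then have concave: "Q powr (-\<alpha>) \<le> w (t1 *\<^sub>R x)"
    using nic \<open>0 < p\<close> w0 l unfolding neg_inv_concave_def Q_def e_def p_def
    by (metis less_eq_real_def mult_pos_pos)
  have "p powr e < (w 0 * (1 + s*t2) powr (-\<alpha>)) powr e"
    by (rule powr_less_mono2_neg) (use e w0 s1 above in \<open>auto simp: p_def\<close>)
  also have "\<dots> = w 0 powr e * (1 + s*t2)"
    using w0 s1 e by (simp add: powr_mult powr_powr)
  finally have "Q \<le> (1 - l) * w 0 powr e + l * (w 0 powr e * (1 + s*t2))"
    unfolding Q_def using l by (intro add_left_mono mult_left_mono) auto
  also have "\<dots> = w 0 powr e * (1 + s * (l * t2))" by (simp add: algebra_simps)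
  finally have "Q \<le> w 0 powr e * (1 + s*t1)" using l by simp
  moreover have "0 < Q" unfolding Q_def using l \<open>0 < p\<close> w0 by (intro add_nonneg_pos) auto
  ultimately have "(w 0 powr e * (1 + s*t1)) powr (-\<alpha>) \<le> Q powr (-\<alpha>)"
    using \<open>0 < \<alpha>\<close> by (intro powr_mono2') auto
  also have "(w 0 powr e * (1 + s*t1)) powr (-\<alpha>) = w 0 * (1 + s*t1) powr (-\<alpha>)"
    using w0 s1 e by (simp add: powr_mult powr_powr)
  finally show ?thesis using concave by simp
qed

lemma mem_K_set_iff_mellin:
  assumes "0 < p" "0 \<le> w 0"
  shows "x \<in> K_set p w \<longleftrightarrow> ennreal (w 0 / p) \<le> mellin p (\<lambda>t. w (t *\<^sub>R x))"
proof -
  have "ennreal (w 0) = ennreal p * ennreal (w 0 / p)"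
    using assms by (simp add: ennreal_mult'[symmetric])
  then show ?thesis
    unfolding K_set_def mellin_def using ennreal_mult_le_mult_iff[of "ennreal p"] assms by simp
qed

lemma mellin_ray_scaleR:
  fixes w :: "'a::real_vector \<Rightarrow> real"
  assumes "(\<lambda>t. w (t *\<^sub>R x)) \<in> borel_measurable borel" "0 < c"
  shows "mellin p (\<lambda>t. w (t *\<^sub>R (c *\<^sub>R x))) = ennreal (c powr (-p)) * mellin p (\<lambda>t. w (t *\<^sub>R x))"
  using mellin_compose_scale[OF assms, of p] by (simp add: mult.commute scaleR_scaleR)

lemma zero_mem_K_set:
  assumes "0 < p" "0 < w 0"
  shows "0 \<in> K_set p w"
  using mem_K_set_iff_mellin[of p w 0] mellin_const_infinite[OF assms(2,1)] assms by simp

text \<open>Comparison with the box \<open>M \<cdot> indicator {0..s}\<close>, whose \<open>p\<close>-th Mellin transform is the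
  assumed lower bound and which \<open>f\<close> crosses only at \<open>s\<close>.\<close>
lemma mellin_lower_bound_of_bounded:
  fixes f :: "real \<Rightarrow> real"
  assumes [measurable]: "f \<in> borel_measurable borel"
    and f: "\<And>t. 0 \<le> f t" "\<And>t. f t \<le> M" and "0 < s" "0 < p" "p \<le> q"
    and "ennreal (M * s powr p / p) \<le> mellin p f"
  shows "ennreal (M * s powr q / q) \<le> mellin q f"
proof -
  define g where "g = (\<lambda>t. M * indicator {0..s} t :: real)"
  have "0 \<le> M" using f order_trans by blast
  then have box: "mellin r g = ennreal (M * s powr r / r)" if "0 < r" for r
    unfolding g_def using mellin_box \<open>0 < s\<close> that by simp
  have "mellin q g \<le> mellin q f"
  proof (rule mellin_le_transfer[where p = p and c = "s powr (q - p)"])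
    show "s powr (q - p) \<le> t powr (q - p)" if "0 < t" "g t < f t" for t
    proof -
      have "s < t" using that f(2)[of t] by (auto simp: g_def split: split_indicator_asm)
      then show ?thesis using \<open>0 < s\<close> \<open>p \<le> q\<close> by (intro powr_mono2) auto
    qed
    show "t powr (q - p) \<le> s powr (q - p)" if "0 < t" "f t < g t" for t
    proof -
      have "t \<le> s" using that f(1)[of t] by (auto simp: g_def split: split_indicator_asm)
      then show ?thesis using that \<open>p \<le> q\<close> by (intro powr_mono2) auto
    qed
  qed (use assms \<open>0 \<le> M\<close> box in \<open>simp_all add: g_def\<close>)
  then show ?thesis using box \<open>0 < p\<close> \<open>p \<le> q\<close> by simp
qed

lemma scaleR_K_set_subset_K_set:
  assumes nic: "neg_inv_concave \<alpha> w" and "0 < \<alpha>" and w0: "0 < w 0" and "0 < a" "a \<le> b"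
    and bound: "\<And>x. w x \<le> M"
  shows "(\<lambda>x. (w 0 / M) powr (1/a - 1/b) *\<^sub>R x) ` K_set a w \<subseteq> K_set b w"
proof (rule image_subsetI)
  fix x assume x: "x \<in> K_set a w"
  define q where "q = w 0 / M"
  define s where "s = q powr (1/a)"
  define l where "l = q powr (1/a - 1/b)"
  have "0 < M" using bound[of 0] w0 by simp
  then have "0 < q" using w0 by (simp add: q_def)
  have ray_measurable: "\<And>x. (\<lambda>t. w (t *\<^sub>R x)) \<in> borel_measurable borel"
    using neg_inv_concave_ray_measurable[OF nic \<open>0 < \<alpha>\<close>] .
  have "M * s powr a / a = w 0 / a"
    using \<open>0 < q\<close> \<open>0 < a\<close> \<open>0 < M\<close> w0 by (simp add: s_def q_def powr_powr)
  then have "ennreal (M * s powr a / a) \<le> mellin a (\<lambda>t. w (t *\<^sub>R x))"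
    using x mem_K_set_iff_mellin[of a w x] \<open>0 < a\<close> w0 by simp
  then have "ennreal (M * s powr b / b) \<le> mellin b (\<lambda>t. w (t *\<^sub>R x))"
    using mellin_lower_bound_of_bounded[OF ray_measurable] assms \<open>0 < q\<close>
      neg_inv_concave_nonneg[OF nic] by (simp add: s_def)
  have "l powr (-b) * s powr b = q"
  proof -
    have "l powr (-b) * s powr b = q powr ((1/a - 1/b) * (-b)) * q powr (1/a * b)"
      by (simp only: l_def s_def powr_powr)
    also have "\<dots> = q powr ((1/a - 1/b) * (-b) + 1/a * b)" by (rule powr_add[symmetric])
    also have "(1/a - 1/b) * (-b) + 1/a * b = 1" using \<open>0 < a\<close> \<open>a \<le> b\<close> by (simp add: field_simps)
    finally show ?thesis using \<open>0 < q\<close> by simp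
  qed
  then have "ennreal (w 0 / b) = ennreal (l powr (-b)) * ennreal (M * s powr b / b)"
    using \<open>0 < M\<close> by (simp add: ennreal_mult'[symmetric] q_def field_simps)
  also have "\<dots> \<le> ennreal (l powr (-b)) * mellin b (\<lambda>t. w (t *\<^sub>R x))"
    using \<open>ennreal (M * s powr b / b) \<le> _\<close> by (rule mult_left_mono) simp
  also have "\<dots> = mellin b (\<lambda>t. w (t *\<^sub>R (l *\<^sub>R x)))"
    using mellin_ray_scaleR[OF ray_measurable] \<open>0 < q\<close> by (simp add: l_def)
  finally show "(w 0 / M) powr (1/a - 1/b) *\<^sub>R x \<in> K_set b w"
    using mem_K_set_iff_mellin[of b w] \<open>0 < a\<close> \<open>a \<le> b\<close> w0 by (simp add: l_def q_def)
qed

text \<open>The profile \<open>\<psi> t = w 0 (1 + s t) powr (-\<alpha>)\<close> with \<open>s powr b = b Beta b (\<alpha> - b)\<close> lies on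
  the boundary of \<open>K\<^sub>b\<close>; the ray of a point of \<open>K\<^sub>b\<close> crosses it at most once, which transfers the
  inequality between \<open>b\<close>-th Mellin transforms to the \<open>a\<close>-th ones.\<close>
lemma K_set_subset_scaleR_K_set:
  assumes nic: "neg_inv_concave \<alpha> w" and "0 < \<alpha>" and w0: "0 < w 0"
    and "0 < a" "a \<le> b" "b < \<alpha>"
  shows "K_set b w \<subseteq> (\<lambda>x. ((b * Beta b (\<alpha> - b)) powr (1/b) / (a * Beta a (\<alpha> - a)) powr (1/a)) *\<^sub>R x)
           ` K_set a w"
proof
  fix x assume x: "x \<in> K_set b w"
  define C where "C = (b * Beta b (\<alpha> - b)) powr (1/b) / (a * Beta a (\<alpha> - a)) powr (1/a)"
  define s where "s = (b * Beta b (\<alpha> - b)) powr (1/b)"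
  define \<psi> where "\<psi> = (\<lambda>t. w 0 * (1 + s*t) powr (-\<alpha>))"
  have Beta: "0 < Beta a (\<alpha> - a)" "0 < Beta b (\<alpha> - b)"
    using assms by (auto intro!: Beta_real_pos)
  have "0 < s" "0 < C" using Beta assms by (simp_all add: s_def C_def)
  have ray_measurable: "\<And>x. (\<lambda>t. w (t *\<^sub>R x)) \<in> borel_measurable borel"
    using neg_inv_concave_ray_measurable[OF nic \<open>0 < \<alpha>\<close>] .
  have mellin_\<psi>: "mellin p \<psi> = ennreal (w 0 * s powr (-p) * Beta p (\<alpha> - p))" if "0 < p" "p < \<alpha>" for p
    unfolding \<psi>_def using mellin_profile that \<open>0 < s\<close> w0 by simp
  have "s powr (-b) = 1 / (b * Beta b (\<alpha> - b))"
    using Beta assms by (simp add: s_def powr_powr powr_minus_divide)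
  then have "mellin b \<psi> = ennreal (w 0 / b)" using mellin_\<psi>[of b] Beta assms by simp
  then have le_b: "mellin b \<psi> \<le> mellin b (\<lambda>t. w (t *\<^sub>R x))"
    using x mem_K_set_iff_mellin[of b w x] assms by simp
  have "mellin a \<psi> \<le> mellin a (\<lambda>t. w (t *\<^sub>R x))"
  proof (rule mellin_le_of_single_crossing[OF ray_measurable, where q = b])
    show "\<psi> t \<le> w (t *\<^sub>R x)" if "0 < t" "t < t'" "\<psi> t' < w (t' *\<^sub>R x)" for t t'
      using neg_inv_concave_ray_above_profile[OF nic \<open>0 < \<alpha>\<close> w0, of s t t' x] that \<open>0 < s\<close>
      by (simp add: \<psi>_def)
    show "mellin b \<psi> < \<infinity>" "mellin a \<psi> < \<infinity>"
      using mellin_\<psi> assms by simp_all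
  qed (use le_b assms \<open>0 < s\<close> neg_inv_concave_nonneg[OF nic] in \<open>simp_all add: \<psi>_def\<close>)
  have "C powr a * (w 0 * s powr (-a) * Beta a (\<alpha> - a)) = w 0 / a"
  proof -
    have "C powr a = s powr a / (a * Beta a (\<alpha> - a))"
      using Beta assms \<open>0 < s\<close> by (simp add: C_def s_def[symmetric] powr_divide powr_powr)
    then show ?thesis
      using Beta assms \<open>0 < s\<close> by (simp add: powr_minus_divide field_simps)
  qed
  then have "ennreal (w 0 / a) = ennreal (C powr a) * mellin a \<psi>"
    using mellin_\<psi>[of a] assms by (simp add: ennreal_mult'[symmetric])
  also have "\<dots> \<le> ennreal (C powr a) * mellin a (\<lambda>t. w (t *\<^sub>R x))"
    using \<open>mellin a \<psi> \<le> _\<close> by (rule mult_left_mono) simp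
  also have "\<dots> = mellin a (\<lambda>t. w (t *\<^sub>R ((1/C) *\<^sub>R x)))"
    using mellin_ray_scaleR[OF ray_measurable, where c = "1/C" and p = a] \<open>0 < C\<close>
    by (simp add: powr_minus_divide powr_divide)
  finally have "(1/C) *\<^sub>R x \<in> K_set a w"
    using mem_K_set_iff_mellin[of a w] assms by simp
  moreover have "x = C *\<^sub>R ((1/C) *\<^sub>R x)" using \<open>0 < C\<close> by simp
  ultimately show "x \<in> (\<lambda>x. ((b * Beta b (\<alpha> - b)) powr (1/b) / (a * Beta a (\<alpha> - a)) powr (1/a)) *\<^sub>R x)
           ` K_set a w"
    unfolding C_def by blast
qed

theorem corollary3:
  fixes w :: "'a::euclidean_space \<Rightarrow> real" and \<alpha> a b :: real
  assumes "\<alpha> > 0" and "neg_inv_concave \<alpha> w" and "w 0 > 0"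
    and "0 < a" and "a \<le> b" and "b < \<alpha>"
  shows "(\<lambda>x. (if a = b then 1 else real_of_ereal (ereal (w 0) / sup_norm w) powr (1/a - 1/b)) *\<^sub>R x)
           ` K_set a w \<subseteq> K_set b w \<and>
         K_set b w \<subseteq> (\<lambda>x. ((b * Beta b (\<alpha> - b)) powr (1/b) / (a * Beta a (\<alpha> - a)) powr (1/a)) *\<^sub>R x)
           ` K_set a w"
proof
  have sup_norm_ge: "ereal (w x) \<le> sup_norm w" for x
    unfolding sup_norm_def by (rule SUP_upper) simp
  consider "a = b" | "a \<noteq> b" "sup_norm w = \<infinity>" | M where "sup_norm w = ereal M"
    using sup_norm_ge[of 0] by (cases "sup_norm w") auto
  then show "(\<lambda>x. (if a = b then 1 else real_of_ereal (ereal (w 0) / sup_norm w) powr (1/a - 1/b)) *\<^sub>R x)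
      ` K_set a w \<subseteq> K_set b w"
  proof cases
    case 2
    then show ?thesis using zero_mem_K_set[of b w] assms by auto
  next
    case (3 M)
    then have "w x \<le> M" for x using sup_norm_ge[of x] by simp
    moreover from this[of 0] have "M \<noteq> 0" using \<open>w 0 > 0\<close> by simp
    ultimately show ?thesis
      using scaleR_K_set_subset_K_set[OF assms(2,1,3,4,5)] 3 by simp
  qed simp
  show "K_set b w \<subseteq> (\<lambda>x. ((b * Beta b (\<alpha> - b)) powr (1/b) / (a * Beta a (\<alpha> - a)) powr (1/a)) *\<^sub>R x)
      ` K_set a w"
    using K_set_subset_scaleR_K_set[OF assms(2,1,3-6)] .
qed

end
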